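(* Let $s,t\ge0$ be integers, let $S$ be any $s\times s$ integer matrix and $T$ any $t\times t$ integer matrix, and let $m,n,m',n'$ be positive integers with $m+n=m'+n'$. Then $H_{m,n}(z)-H_{m',n'}(z)$ is independent of $z$, i.e. it takes the same value for all integers $z$.
   Context: $h_k$ denotes the complete homogeneous symmetric function of degree $k$, with $h_0=1$ and $h_k=0$ for $k<0$. For integer matrices $S=(S_{ij})_{1\le i,j\le s}$, $T=(T_{ij})_{1\le i,j\le t}$, positive integers $m,n$ and any integer $z$, $H_{m,n}(z)$ is the determinant of the $(s+t+2)\times(s+t+2)$ matrix whose entries are as follows (rows and columns indexed $1,\dots,s+t+2$): - for $1\le i,j\le s$: $h_{S_{ij}}$; - row $s+1$, columns $1,\dots,s$: all $0$ except column $s$, which is $1$; rows $s+2,\dots,s+t+2$, columns $1,\dots,s$: $0$; - column $s+1$: $h_{S_{i,s}+m}$ in row $i\le s$, $h_m$ in row $s+1$, $h_z$ in row $s+2$, and $0$ in rows $>s+2$; - column $s+2$: $h_{S_{i,s}+m+n-z}$ in row $i\le s$, $h_{m+n-z}$ in row $s+1$, $h_n$ in row $s+2$, $1$ in row $s+3$ (if $t>0$), $0$ in rows $>s+3$; - column $s+2+j$ for $1\le j\le t$: $h_{S_{i,s}+m+n-z+T_{1j}}$ in row $i\le s$, $h_{m+n-z+T_{1j}}$ in row $s+1$, $h_{n+T_{1j}}$ in row $s+2$, and $h_{T_{ij}}$ in row $s+2+i$ for $1\le i\le t$. *)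

theory Defs
  imports "Jordan_Normal_Form.Determinant"
begin

text \<open>The complete homogeneous symmetric functions are modelled by an arbitrary
  sequence h :: int => 'a in a commutative ring with h 0 = 1 and h k = 0 for k < 0. Matrices S, T are given as functions nat => nat => int,
  indexed from 1 as in the paper. Entry (i,j) below uses 1-based indices.\<close>

definition H_entry ::
  "(int \<Rightarrow> 'a::comm_ring_1) \<Rightarrow> nat \<Rightarrow> nat \<Rightarrow> (nat \<Rightarrow> nat \<Rightarrow> int) \<Rightarrow> (nat \<Rightarrow> nat \<Rightarrow> int)
    \<Rightarrow> int \<Rightarrow> int \<Rightarrow> int \<Rightarrow> nat \<Rightarrow> nat \<Rightarrow> 'a" where
  "H_entry h s t S T m n z i j =
    (if j \<le> s then
       (if i \<le> s then h (S i j) else if i = s + 1 \<and> j = s then 1 else 0)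
     else if j = s + 1 then
       (if i \<le> s then h (S i s + m) else if i = s + 1 then h m
        else if i = s + 2 then h z else 0)
     else if j = s + 2 then
       (if i \<le> s then h (S i s + m + n - z) else if i = s + 1 then h (m + n - z)
        else if i = s + 2 then h n else if i = s + 3 \<and> t > 0 then 1 else 0)
     else
       (let k = j - (s + 2) in
        if i \<le> s then h (S i s + m + n - z + T 1 k)
        else if i = s + 1 then h (m + n - z + T 1 k)
        else if i = s + 2 then h (n + T 1 k)
        else h (T (i - (s + 2)) k)))"

definition H_mat ::
  "(int \<Rightarrow> 'a::comm_ring_1) \<Rightarrow> nat \<Rightarrow> nat \<Rightarrow> (nat \<Rightarrow> nat \<Rightarrow> int) \<Rightarrow> (nat \<Rightarrow> nat \<Rightarrow> int)
    \<Rightarrow> int \<Rightarrow> int \<Rightarrow> int \<Rightarrow> 'a mat" where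
  "H_mat h s t S T m n z =
     mat (s + t + 2) (s + t + 2) (\<lambda>(i, j). H_entry h s t S T m n z (i + 1) (j + 1))"

definition H_det ::
  "(int \<Rightarrow> 'a::comm_ring_1) \<Rightarrow> nat \<Rightarrow> nat \<Rightarrow> (nat \<Rightarrow> nat \<Rightarrow> int) \<Rightarrow> (nat \<Rightarrow> nat \<Rightarrow> int)
    \<Rightarrow> int \<Rightarrow> int \<Rightarrow> int \<Rightarrow> 'a" where
  "H_det h s t S T m n z = det (H_mat h s t S T m n z)"

end

theory Submission
  imports Defs
begin

(* Write H(z) for the (s+t+2)-square matrix defining H_{m,n}(z) and
   expand its determinant along the single entry h_z in position (s+2, s+1):
     det H(z) = h_z * C + det H0(z),
   where C is the cofactor of that entry and H0(z) is H(z) with the entry replaced by 0.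
   (1) Deleting row s+2 and column s+1 removes every entry in which m and n occur
       other than through m+n, so C depends on (m,n) only via m+n.
   (2) H0(z) is block upper triangular with respect to the split {1..s+1} | {s+2..},
       and z occurs only in its upper right block; since the determinant of such a
       matrix depends only on its diagonal blocks, det H0(z) does not depend on z.
   Hence H_{m,n}(z) - H_{m',n'}(z) = det H0_{m,n} - det H0_{m',n'} for every z.
   The argument holds for an arbitrary sequence h in a commutative ring. *)

lemma permutes_keeps_head:
  fixes N K i :: nat
  assumes p: "p permutes {0..<N}" and KN: "K \<le> N"
    and tail: "\<forall>i. K \<le> i \<and> i < N \<longrightarrow> K \<le> p i"
    and i: "i < K"
  shows "p i < K"
proof (rule ccontr)
  assume not_head: "\<not> p i < K"
  have p_range: "x < N \<Longrightarrow> p x < N" for x using permutes_in_image[OF p, of x] by auto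
  have into_tail: "p ` {K..<N} \<subseteq> {K..<N}" using tail p_range by auto
  have inj_tail: "inj_on p {K..<N}" using permutes_inj[OF p] by (auto intro: inj_on_subset)
  have tail_onto: "p ` {K..<N} = {K..<N}" by (rule endo_inj_surj[OF _ into_tail inj_tail]) simp
  have "p i \<in> {K..<N}" using not_head i KN p_range by auto
  then obtain j where j: "j \<in> {K..<N}" "p i = p j" using tail_onto by (metis imageE)
  then have "i = j" using permutes_inj[OF p] by (auto dest: injD)
  then show False using j i by auto
qed

text \<open>This holds over
  any commutative ring, so the library's block lemmas (stated for domains) do not apply.\<close>

lemma det_block_upper_triangular_eq:
  fixes A B :: "'a::comm_ring_1 mat"
  assumes A: "A \<in> carrier_mat N N" and B: "B \<in> carrier_mat N N" and KN: "K \<le> N"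
    and zero_A: "\<And>i j. K \<le> i \<Longrightarrow> i < N \<Longrightarrow> j < K \<Longrightarrow> A $$ (i,j) = 0"
    and zero_B: "\<And>i j. K \<le> i \<Longrightarrow> i < N \<Longrightarrow> j < K \<Longrightarrow> B $$ (i,j) = 0"
    and agree: "\<And>i j. i < N \<Longrightarrow> j < N \<Longrightarrow> \<not> (i < K \<and> K \<le> j) \<Longrightarrow> A $$ (i,j) = B $$ (i,j)"
  shows "det A = det B"
proof -
  have "(\<Prod>i = 0..<N. A $$ (i, p i)) = (\<Prod>i = 0..<N. B $$ (i, p i))"
    if p: "p permutes {0..<N}" for p
  proof (cases "\<forall>i. K \<le> i \<and> i < N \<longrightarrow> K \<le> p i")
    case True
    text \<open>Then p preserves both blocks, so no factor lies in the upper right block.\<close>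
    have head: "i < K \<Longrightarrow> p i < K" for i using permutes_keeps_head[OF p KN True] .
    have range: "i < N \<Longrightarrow> p i < N" for i using p by (auto simp: permutes_in_image)
    show ?thesis
    proof (rule prod.cong[OF refl])
      fix i assume "i \<in> {0..<N}"
      then show "A $$ (i, p i) = B $$ (i, p i)"
        using agree[of i "p i"] head[of i] True range[of i] by (cases "i < K") auto
    qed
  next
    case False
    text \<open>Otherwise some factor lies in the zero lower left block.\<close>
    then obtain i where i: "K \<le> i" "i < N" "p i < K" by (auto simp: not_le)
    then have "A $$ (i, p i) = 0" "B $$ (i, p i) = 0" using zero_A zero_B by auto
    then have "(\<Prod>i = 0..<N. A $$ (i, p i)) = 0" "(\<Prod>i = 0..<N. B $$ (i, p i)) = 0"
      using i by (auto intro!: prod_zero)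
    then show ?thesis by simp
  qed
  then show ?thesis unfolding det_def'[OF A] det_def'[OF B] by (intro sum.cong) auto
qed

definition zero_entry :: "'a::zero mat \<Rightarrow> nat \<Rightarrow> nat \<Rightarrow> 'a mat" where
  "zero_entry A r c =
     mat (dim_row A) (dim_col A) (\<lambda>(i,j). if i = r \<and> j = c then 0 else A $$ (i,j))"

lemma zero_entry_dim [simp]:
  "dim_row (zero_entry A r c) = dim_row A" "dim_col (zero_entry A r c) = dim_col A"
  unfolding zero_entry_def by simp_all

lemma zero_entry_carrier: "A \<in> carrier_mat N N \<Longrightarrow> zero_entry A r c \<in> carrier_mat N N"
  unfolding zero_entry_def by simp

lemma zero_entry_index:
  "i < dim_row A \<Longrightarrow> j < dim_col A \<Longrightarrow>
     zero_entry A r c $$ (i,j) = (if i = r \<and> j = c then 0 else A $$ (i,j))"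
  unfolding zero_entry_def by simp

text \<open>Linearity of the determinant in row r, applied to the splitting of that row into
  its entry at column c and the rest.\<close>

lemma det_split_at_entry:
  fixes A :: "'a::comm_ring_1 mat"
  assumes A: "A \<in> carrier_mat N N" and r: "r < N" and c: "c < N"
  shows "det A = A $$ (r,c) * cofactor A r c + det (zero_entry A r c)"
proof -
  define A0 where "A0 = zero_entry A r c"
  have A0: "A0 \<in> carrier_mat N N" unfolding A0_def using A by (rule zero_entry_carrier)
  have A0_index: "i < N \<Longrightarrow> j < N \<Longrightarrow> A0 $$ (i,j) = (if i = r \<and> j = c then 0 else A $$ (i,j))"
    for i j using A unfolding A0_def by (simp add: zero_entry_index)
  text \<open>Row r is the only one that changes, so the cofactors along row r agree.\<close>
  have "mat_delete A0 r j = mat_delete A r j" for j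
    using A A0 unfolding mat_delete_def by (intro eq_matI) (auto simp: A0_index)
  then have same_cofactors: "cofactor A0 r j = cofactor A r j" for j
    unfolding cofactor_def by simp
  have "det A = (\<Sum>j<N. A $$ (r,j) * cofactor A r j)" by (rule laplace_expansion_row[OF A r])
  also have "\<dots> = (\<Sum>j<N. A0 $$ (r,j) * cofactor A0 r j
                        + (if j = c then A $$ (r,c) * cofactor A r c else 0))"
    using r by (intro sum.cong) (auto simp: A0_index same_cofactors)
  also have "\<dots> = (\<Sum>j<N. A0 $$ (r,j) * cofactor A0 r j) + A $$ (r,c) * cofactor A r c"
    using c by (simp add: sum.distrib)
  also have "(\<Sum>j<N. A0 $$ (r,j) * cofactor A0 r j) = det A0"
    by (rule laplace_expansion_row[OF A0 r, symmetric])
  finally show ?thesis unfolding A0_def by (simp add: add.commute)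
qed

lemma H_mat_carrier: "H_mat h s t S T m n z \<in> carrier_mat (s+t+2) (s+t+2)"
  unfolding H_mat_def by simp

lemma H_mat_dim [simp]:
  "dim_row (H_mat h s t S T m n z) = s+t+2" "dim_col (H_mat h s t S T m n z) = s+t+2"
  unfolding H_mat_def by simp_all

lemma H_mat_index:
  "i < s + t + 2 \<Longrightarrow> j < s + t + 2 \<Longrightarrow>
     H_mat h s t S T m n z $$ (i,j) = H_entry h s t S T m n z (Suc i) (Suc j)"
  unfolding H_mat_def by simp

lemma H_entry_z_position: "H_entry h s t S T m n z (s+2) (s+1) = h z"
  unfolding H_entry_def by simp

lemma H_entry_depends_on_sum:
  assumes "m + n = m' + n'" "I \<noteq> s + 2" "J \<noteq> s + 1"
  shows "H_entry h s t S T m n z I J = H_entry h s t S T m' n' z I J"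
proof -
  have n: "n = m' + n' - m" using assms(1) by simp
  show ?thesis using assms(2,3) unfolding H_entry_def Let_def n by (simp add: algebra_simps)
qed

lemma H_entry_lower_left_zero:
  assumes "s + 2 \<le> I" "J \<le> s + 1" "\<not> (I = s + 2 \<and> J = s + 1)"
  shows "H_entry h s t S T m n z I J = 0"
  using assms unfolding H_entry_def by auto

lemma H_entry_z_only_upper_right:
  assumes "\<not> (I \<le> s + 1 \<and> s + 2 \<le> J)" "\<not> (I = s + 2 \<and> J = s + 1)"
  shows "H_entry h s t S T m n z I J = H_entry h s t S T m n z' I J"
  using assms unfolding H_entry_def Let_def by auto

lemma H_det_split:
  "H_det h s t S T m n z = h z * cofactor (H_mat h s t S T m n z) (s+1) s
     + det (zero_entry (H_mat h s t S T m n z) (s+1) s)"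
proof -
  have "H_det h s t S T m n z = H_mat h s t S T m n z $$ (s+1, s) * cofactor (H_mat h s t S T m n z) (s+1) s
     + det (zero_entry (H_mat h s t S T m n z) (s+1) s)"
    unfolding H_det_def by (rule det_split_at_entry[OF H_mat_carrier]) auto
  moreover have "H_mat h s t S T m n z $$ (s+1, s) = h z"
    using H_entry_z_position[of h s t S T m n z] by (simp add: H_mat_index)
  ultimately show ?thesis by simp
qed

lemma H_cofactor_depends_on_sum:
  assumes "m + n = m' + n'"
  shows "cofactor (H_mat h s t S T m n z) (s+1) s = cofactor (H_mat h s t S T m' n' z) (s+1) s"
proof -
  have "mat_delete (H_mat h s t S T m n z) (s+1) s = mat_delete (H_mat h s t S T m' n' z) (s+1) s"
  proof (rule eq_matI)
    fix i j assume "i < dim_row (mat_delete (H_mat h s t S T m' n' z) (s+1) s)"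
      "j < dim_col (mat_delete (H_mat h s t S T m' n' z) (s+1) s)"
    then have "i < s + t + 1" "j < s + t + 1" by auto
    then show "mat_delete (H_mat h s t S T m n z) (s+1) s $$ (i,j)
             = mat_delete (H_mat h s t S T m' n' z) (s+1) s $$ (i,j)"
      unfolding mat_delete_def by (auto simp: H_mat_index intro!: H_entry_depends_on_sum[OF assms])
  qed simp_all
  then show ?thesis unfolding cofactor_def by simp
qed

lemma H_remainder_index:
  assumes "i < s + t + 2" "j < s + t + 2"
  shows "zero_entry (H_mat h s t S T m n z) (s+1) s $$ (i,j)
       = (if i = s + 1 \<and> j = s then 0 else H_entry h s t S T m n z (Suc i) (Suc j))"
  using assms by (simp add: zero_entry_index H_mat_index)

lemma H_remainder_indep_z:
  "det (zero_entry (H_mat h s t S T m n z) (s+1) s) = det (zero_entry (H_mat h s t S T m n z') (s+1) s)"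
proof (rule det_block_upper_triangular_eq[where K = "s+1" and N = "s+t+2"])
  fix i j assume ij: "s + 1 \<le> i" "i < s+t+2" "j < s + 1"
  have j: "j < s + t + 2" using ij by simp
  have "H_entry h s t S T m n w (Suc i) (Suc j) = 0" if "\<not> (i = s + 1 \<and> j = s)" for w
    using ij that by (intro H_entry_lower_left_zero) auto
  then show "zero_entry (H_mat h s t S T m n z) (s+1) s $$ (i,j) = 0"
    and "zero_entry (H_mat h s t S T m n z') (s+1) s $$ (i,j) = 0"
    unfolding H_remainder_index[OF ij(2) j] by simp_all
next
  fix i j assume ij: "i < s+t+2" "j < s+t+2" "\<not> (i < s + 1 \<and> s + 1 \<le> j)"
  have "H_entry h s t S T m n z (Suc i) (Suc j) = H_entry h s t S T m n z' (Suc i) (Suc j)"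
    if "\<not> (i = s + 1 \<and> j = s)"
    using ij that by (intro H_entry_z_only_upper_right) auto
  then show "zero_entry (H_mat h s t S T m n z) (s+1) s $$ (i,j)
           = zero_entry (H_mat h s t S T m n z') (s+1) s $$ (i,j)"
    unfolding H_remainder_index[OF ij(1,2)] by simp
qed (rule zero_entry_carrier[OF H_mat_carrier] | simp)+

theorem lemma2p4:
  fixes h :: "int \<Rightarrow> 'a::comm_ring_1"
    and s t :: nat and S T :: "nat \<Rightarrow> nat \<Rightarrow> int"
    and m n m' n' :: int
  assumes h0: "h 0 = 1"
    and hneg: "\<And>k. k < 0 \<Longrightarrow> h k = 0"
    and pos: "0 < m" "0 < n" "0 < m'" "0 < n'"
    and sum: "m + n = m' + n'"
  shows "\<forall>z z'. H_det h s t S T m n z - H_det h s t S T m' n' z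
              = H_det h s t S T m n z' - H_det h s t S T m' n' z'"
proof (intro allI)
  fix z z' :: int
  let ?R = "\<lambda>a b w. det (zero_entry (H_mat h s t S T a b w) (s+1) s)"
  text \<open>The h_z-terms cancel in the difference, by fact (1).\<close>
  have "H_det h s t S T m n w - H_det h s t S T m' n' w = ?R m n w - ?R m' n' w" for w
    unfolding H_det_split H_cofactor_depends_on_sum[OF sum] by simp
  then show "H_det h s t S T m n z - H_det h s t S T m' n' z
           = H_det h s t S T m n z' - H_det h s t S T m' n' z'"
    using H_remainder_indep_z by metis
qed

end
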